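(* Consider the allocation problem with $m$ divisible goods and $n$ agents as described in the context, and let $\pi=(\pi_1,\ldots,\pi_n)$ be the agents' true preference lists. Let $a^\pi$ be the allocation produced by the Synchronized Greedy (SG) mechanism when every agent $i$ bids $\pi_i$. Then for every allocation $a\neq a^\pi$ there exists an agent $i$ such that $a^\pi_{i*} >_i a_{i*}$.
   Context: There are $m$ distinct divisible goods; good $j$ ($1\le j\le m$) is available in amount $q_j>0$. There are $n$ agents; agent $i$ ($1\le i\le n$) is to receive a total of $r_i>0$. Assume $\sum_j q_j=\sum_i r_i$. An allocation is a family of numbers $a_{ij}\ge 0$ with $\sum_j a_{ij}=r_i$ for all $i$ and $\sum_i a_{ij}=q_j$ for all $j$; $a_{i*}=(a_{i1},\ldots,a_{im})$ is agent $i$'s share. Each agent $i$ has a true preference list $\pi_i$, a permutation of the goods ($\pi_i(1)$ is the most preferred good). Agent $i$ (lexicographically) prefers share $a_{i*}$ to $b_{i*}$, written $a_{i*}>_i b_{i*}$, if the leftmost nonzero coordinate of $(a_{i\pi_i(1)}-b_{i\pi_i(1)},\ldots,a_{i\pi_i(m)}-b_{i\pi_i(m)})$ is positive. The SG mechanism: each agent $i$ submits a bid $\sigma_i$, a permutation of the goods. The mechanism runs a continuous process over time $t\in[0,1]$: at each time, each agent $i$ receives, at rate $r_i$ per unit time, the good that is highest in $\sigma_i$ among the goods not yet exhausted (a good is exhausted once the total amount handed out equals its quantity $q_j$; several agents may receive the same good simultaneously, and whenever a good is exhausted all agents receiving it switch instantly to their next non-exhausted good in their bid). At time $1$ all goods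 are exhausted and all agents have their totals $r_i$; $a^\sigma_{ij}$ denotes the total amount of good $j$ received by agent $i$. *)

theory Defs
  imports Main "HOL.Real"
begin

text \<open>Goods are indexed by 0..<m, agents by 0..<n. A bid / preference list is a
list of goods (index 0 = most preferred) that is a permutation of 0..<m.\<close>

definition is_pref_list :: "nat \<Rightarrow> nat list \<Rightarrow> bool" where
  "is_pref_list m p \<longleftrightarrow> distinct p \<and> set p = {..<m}"

definition is_allocation ::
  "nat \<Rightarrow> nat \<Rightarrow> (nat \<Rightarrow> real) \<Rightarrow> (nat \<Rightarrow> real) \<Rightarrow> (nat \<Rightarrow> nat \<Rightarrow> real) \<Rightarrow> bool" where
  "is_allocation n m q r a \<longleftrightarrow>
     (\<forall>i<n. \<forall>j<m. a i j \<ge> 0) \<and>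
     (\<forall>i<n. (\<Sum>j<m. a i j) = r i) \<and>
     (\<forall>j<m. (\<Sum>i<n. a i j) = q j)"

definition lex_prefers :: "nat \<Rightarrow> nat list \<Rightarrow> (nat \<Rightarrow> real) \<Rightarrow> (nat \<Rightarrow> real) \<Rightarrow> bool" where
  "lex_prefers m p s t \<longleftrightarrow>
     (\<exists>k<m. (\<forall>l<k. s (p ! l) = t (p ! l)) \<and> s (p ! k) > t (p ! k))"

text \<open>One phase of the SG eating process, between two consecutive exhaustion events.
x i j is the amount of good j handed to agent i so far. Each agent eats, at rate r i,
the first non-exhausted good of its bid; the phase lasts until the first good
(among those being eaten) is exhausted.\<close>
definition sg_step ::
  "nat \<Rightarrow> nat \<Rightarrow> (nat \<Rightarrow> real) \<Rightarrow> (nat \<Rightarrow> real) \<Rightarrow> (nat \<Rightarrow> nat list)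
    \<Rightarrow> (nat \<Rightarrow> nat \<Rightarrow> real) \<Rightarrow> (nat \<Rightarrow> nat \<Rightarrow> real)" where
  "sg_step n m q r \<sigma> x =
    (let rem = (\<lambda>j. q j - (\<Sum>i<n. x i j));
         active = (\<lambda>i. \<exists>j\<in>set (\<sigma> i). rem j > 0);
         cur = (\<lambda>i. hd (filter (\<lambda>j. rem j > 0) (\<sigma> i)));
         rate = (\<lambda>j. \<Sum>i\<in>{i. i < n \<and> active i \<and> cur i = j}. r i);
         D = {rem j / rate j | j. j < m \<and> rate j > 0}
     in if D = {} then x
        else (\<lambda>i j. if i < n \<and> j < m
                    then x i j + (if active i \<and> cur i = j then r i * Min D else 0)
                    else 0))"

text \<open>The SG allocation a^sigma: every phase exhausts at least one good, so m phases
starting from the empty allocation run the process to completion (time 1).\<close>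
definition SG ::
  "nat \<Rightarrow> nat \<Rightarrow> (nat \<Rightarrow> real) \<Rightarrow> (nat \<Rightarrow> real) \<Rightarrow> (nat \<Rightarrow> nat list) \<Rightarrow> (nat \<Rightarrow> nat \<Rightarrow> real)" where
  "SG n m q r \<sigma> = (sg_step n m q r \<sigma> ^^ m) (\<lambda>i j. 0)"

end

theory Submission
  imports Defs
begin

text \<open>Every phase of SG exhausts a good, so after \<open>m\<close> phases all goods are gone. Let \<open>a\<close> be
another allocation and suppose no agent prefers its SG share. If \<open>a \<noteq> a\<^sup>\<pi>\<close>, some agent \<open>i\<close>
then strictly prefers \<open>a\<close>: up to some good \<open>g\<close> on its list it gets the same amounts and it
gets more of \<open>g\<close>. Since \<open>g\<close> is exhausted under both allocations, some agent \<open>i'\<close> gets less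
of \<open>g\<close> under \<open>a\<close>, so \<open>i'\<close> ate \<open>g\<close> at some phase before \<open>g\<close> ran out. Then every good \<open>i'\<close>
ranks above \<open>g\<close> was exhausted even earlier, and \<open>i'\<close> in turn prefers \<open>a\<close> at one of those.
This yields a strictly decreasing sequence of exhaustion times, which is impossible.\<close>

lemma not_before_hd_filter:
  assumes "distinct xs" and "filter P xs \<noteq> []" and "hd (filter P xs) = xs ! k"
    and "k < length xs" and "l < k"
  shows "\<not> P (xs ! l)"
proof -
  define x where "x = hd (filter P xs)"
  obtain ys zs where xs: "xs = ys @ x # zs" and ys: "\<forall>y\<in>set ys. \<not> P y"
    using assms(2) filter_eq_Cons_iff[of P xs x "tl (filter P xs)"] unfolding x_def by auto
  have "xs ! length ys = xs ! k" "length ys < length xs"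
    using assms(3) unfolding x_def[symmetric] by (simp_all add: xs)
  then have "k = length ys"
    using nth_eq_iff_index_eq[OF assms(1)] assms(4) by metis
  with assms(5) have "xs ! l \<in> set ys"
    by (simp add: xs nth_append)
  with ys show ?thesis by blast
qed

lemma ex_less_Suc_if_less:
  fixes f :: "nat \<Rightarrow> 'a::linorder"
  shows "f 0 < f k \<Longrightarrow> \<exists>p<k. f p < f (Suc p)"
proof (induction k)
  case (Suc k)
  show ?case
  proof (cases "f 0 < f k")
    case True
    with Suc.IH show ?thesis using less_SucI by blast
  next
    case False
    with Suc.prems have "f k < f (Suc k)" by simp
    then show ?thesis by blast
  qed
qed simp

lemma lex_prefers_total:
  assumes "k0 < m" and "s (p ! k0) \<noteq> t (p ! k0)"
  shows "lex_prefers m p s t \<or> lex_prefers m p t s"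
proof -
  define k where "k = (LEAST k. s (p ! k) \<noteq> t (p ! k))"
  have "k < m"
    using Least_le[of "\<lambda>k. s (p ! k) \<noteq> t (p ! k)", OF assms(2)] assms(1) unfolding k_def
    by linarith
  moreover have "s (p ! k) \<noteq> t (p ! k)"
    unfolding k_def using assms(2) by (rule LeastI)
  moreover have "\<forall>l<k. s (p ! l) = t (p ! l)"
    unfolding k_def using not_less_Least by blast
  ultimately show ?thesis
    unfolding lex_prefers_def by (metis linorder_neqE)
qed

locale sg_setting =
  fixes n m :: nat and q r :: "nat \<Rightarrow> real" and \<pi> :: "nat \<Rightarrow> nat list"
  assumes q_pos: "\<forall>j<m. q j > 0" and r_pos: "\<forall>i<n. r i > 0"
    and prefs: "\<forall>i<n. is_pref_list m (\<pi> i)" and agents_nonempty: "0 < n"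
begin

definition "remaining x j = q j - (\<Sum>i<n. x i j)"
definition "active x i = (\<exists>j\<in>set (\<pi> i). remaining x j > 0)"
definition "current x i = hd (filter (\<lambda>j. remaining x j > 0) (\<pi> i))"
definition "rate x j = (\<Sum>i\<in>{i. i < n \<and> active x i \<and> current x i = j}. r i)"

definition "durations x = {remaining x j / rate x j | j. j < m \<and> rate x j > 0}"

abbreviation "step \<equiv> sg_step n m q r \<pi>"
definition "state p = (step ^^ p) (\<lambda>i j. 0)"

lemma step_eq:
  "step x = (if durations x = {} then x else (\<lambda>i j. if i < n \<and> j < m then x i j +
     (if active x i \<and> current x i = j then r i * Min (durations x) else 0) else 0))"
  unfolding sg_step_def Let_def durations_def rate_def current_def active_def remaining_def
  by simp

lemma state_0: "state 0 = (\<lambda>i j. 0)"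
  by (simp add: state_def)

lemma state_Suc: "state (Suc p) = step (state p)"
  by (simp add: state_def)

lemma finite_durations: "finite (durations x)"
  by (rule finite_subset[of _ "(\<lambda>j. remaining x j / rate x j) ` {..<m}"])
    (auto simp: durations_def)

lemma rate_nonneg: "rate x j \<ge> 0"
  unfolding rate_def using r_pos by (auto intro!: sum_nonneg intro: less_imp_le)

lemma set_pref: "i < n \<Longrightarrow> set (\<pi> i) = {..<m}"
  using prefs by (auto simp: is_pref_list_def)

lemma length_pref: "i < n \<Longrightarrow> length (\<pi> i) = m"
  using prefs distinct_card[of "\<pi> i"] by (auto simp: is_pref_list_def)

lemma pref_index_exists: "i < n \<Longrightarrow> j < m \<Longrightarrow> \<exists>k<m. \<pi> i ! k = j"
  using set_pref[of i] length_pref[of i] by (metis in_set_conv_nth lessThan_iff)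

lemma filter_remaining_nonempty: "active x i \<Longrightarrow> filter (\<lambda>j. remaining x j > 0) (\<pi> i) \<noteq> []"
  unfolding active_def by (auto simp: filter_empty_conv)

lemma current_remaining_pos: "active x i \<Longrightarrow> remaining x (current x i) > 0"
  using hd_in_set[OF filter_remaining_nonempty] unfolding current_def by force

lemma Min_durations_nonneg:
  "\<forall>j<m. remaining x j \<ge> 0 \<Longrightarrow> durations x \<noteq> {} \<Longrightarrow> Min (durations x) \<ge> 0"
  using Min_in[OF finite_durations] by (fastforce simp: durations_def)

lemma sum_step:
  assumes "durations x \<noteq> {}" and "j < m"
  shows "(\<Sum>i<n. step x i j) = (\<Sum>i<n. x i j) + rate x j * Min (durations x)"
proof -
  have "(\<Sum>i<n. step x i j)
      = (\<Sum>i<n. x i j) + (\<Sum>i<n. if active x i \<and> current x i = j then r i * Min (durations x) else 0)"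
    using assms by (simp add: step_eq sum.distrib)
  also have "(\<Sum>i<n. if active x i \<and> current x i = j then r i * Min (durations x) else 0)
      = (\<Sum>i\<in>{i. i < n \<and> active x i \<and> current x i = j}. r i * Min (durations x))"
    by (simp add: sum.If_cases lessThan_def Collect_conj_eq Int_commute)
  finally show ?thesis
    unfolding rate_def by (simp add: sum_distrib_right)
qed

lemma step_mono:
  assumes "\<forall>j<m. remaining x j \<ge> 0" and "i < n" and "j < m"
  shows "x i j \<le> step x i j"
  using assms Min_durations_nonneg[OF assms(1)] r_pos by (simp add: step_eq less_imp_le)

lemma remaining_step_nonneg:
  assumes inv: "\<forall>j<m. remaining x j \<ge> 0" and j: "j < m"
  shows "remaining (step x) j \<ge> 0"
proof (cases "durations x = {}")
  case True
  then show ?thesis using inv j by (simp add: step_eq)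
next
  case False
  have "rate x j * Min (durations x) \<le> remaining x j"
  proof (cases "rate x j > 0")
    case True
    have "Min (durations x) \<le> remaining x j / rate x j"
      using True j by (intro Min_le[OF finite_durations]) (auto simp: durations_def)
    with True show ?thesis by (simp add: field_simps)
  next
    case False
    with rate_nonneg[of x j] inv j show ?thesis by simp
  qed
  then show ?thesis
    using sum_step[OF False j] by (simp add: remaining_def)
qed

text \<open>The good realising the minimal duration runs out; it was positive because someone ate it.\<close>
lemma step_exhausts_good:
  assumes D: "durations x \<noteq> {}"
  shows "\<exists>j<m. remaining x j > 0 \<and> remaining (step x) j = 0"
proof -
  from Min_in[OF finite_durations D] obtain j where j: "j < m" "rate x j > 0"
    and M: "Min (durations x) = remaining x j / rate x j"
    by (auto simp: durations_def)
  have "remaining (step x) j = 0"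
    using sum_step[OF D j(1)] M j(2) by (simp add: remaining_def)
  moreover have "{i. i < n \<and> active x i \<and> current x i = j} \<noteq> {}"
    using j(2) unfolding rate_def by force
  then obtain i where "active x i" "current x i = j"
    by blast
  ultimately show ?thesis
    using current_remaining_pos j(1) by blast
qed

text \<open>With no phase left, the first agent has no good to eat, so all goods are gone.\<close>
lemma durations_empty_exhausted:
  assumes D: "durations x = {}" and j: "j < m"
  shows "remaining x j \<le> 0"
proof (rule ccontr)
  assume "\<not> remaining x j \<le> 0"
  with j set_pref[OF agents_nonempty] have act: "active x 0"
    unfolding active_def by force
  define c where "c = current x 0"
  have "c \<in> set (\<pi> 0)"
    using hd_in_set[OF filter_remaining_nonempty[OF act]] unfolding c_def current_def by simp
  then have c: "c < m" using set_pref[OF agents_nonempty] by auto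
  have "r 0 \<le> rate x c"
    unfolding rate_def by (rule member_le_sum) (use act c_def agents_nonempty r_pos in auto)
  then have "rate x c > 0"
    using r_pos agents_nonempty by force
  with c D show False
    unfolding durations_def by blast
qed

lemma remaining_state_nonneg: "\<forall>j<m. remaining (state p) j \<ge> 0"
proof (induction p)
  case 0
  then show ?case using q_pos by (simp add: state_0 remaining_def less_imp_le)
next
  case (Suc p)
  then show ?case using remaining_step_nonneg by (simp add: state_Suc)
qed

lemma state_mono: "p \<le> p' \<Longrightarrow> i < n \<Longrightarrow> j < m \<Longrightarrow> state p i j \<le> state p' i j"
proof (induction p' rule: dec_induct)
  case (step k)
  have "state k i j \<le> step (state k) i j"
    by (rule step_mono[OF remaining_state_nonneg]) (use step in auto)
  with step show ?case
    by (simp add: state_Suc)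
qed simp

lemma remaining_state_antimono:
  "p \<le> p' \<Longrightarrow> j < m \<Longrightarrow> remaining (state p') j \<le> remaining (state p) j"
  unfolding remaining_def by (intro diff_left_mono sum_mono state_mono) auto

definition "exhausted p = {j. j < m \<and> remaining (state p) j = 0}"

lemma exhausted_all_or_card_ge: "exhausted p = {..<m} \<or> p \<le> card (exhausted p)"
proof (induction p)
  case (Suc p)
  show ?case
  proof (cases "durations (state p) = {}")
    case True
    then have "exhausted p = {..<m}"
      using durations_empty_exhausted remaining_state_nonneg[of p]
      unfolding exhausted_def by (auto intro: order.antisym)
    with True show ?thesis
      unfolding exhausted_def by (simp add: state_Suc step_eq)
  next
    case False
    from step_exhausts_good[OF False] obtain j where j: "j < m"
      "remaining (state p) j > 0" "remaining (state (Suc p)) j = 0"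
      by (auto simp: state_Suc)
    have "exhausted p \<subseteq> exhausted (Suc p)"
      unfolding exhausted_def
      using remaining_state_antimono[of p "Suc p"] remaining_state_nonneg[of "Suc p"]
      by (force intro: order.antisym)
    moreover have "j \<in> exhausted (Suc p)" "j \<notin> exhausted p"
      using j unfolding exhausted_def by auto
    ultimately have "card (exhausted p) < card (exhausted (Suc p))"
      by (intro psubset_card_mono) (auto simp: exhausted_def)
    with Suc.IH \<open>j \<notin> exhausted p\<close> j(1) show ?thesis by auto
  qed
qed simp

lemma remaining_final: "j < m \<Longrightarrow> remaining (state m) j = 0"
  using exhausted_all_or_card_ge[of m] card_seteq[of "{..<m}" "exhausted m"]
  unfolding exhausted_def by auto

lemma ate_before_exhaustion:
  assumes "i < n" and "j < m" and "state m i j > 0"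
  shows "\<exists>p<m. active (state p) i \<and> current (state p) i = j \<and> remaining (state p) j > 0"
proof -
  obtain p where p: "p < m" "state p i j < state (Suc p) i j"
    using ex_less_Suc_if_less[of "\<lambda>p. state p i j"] assms(3) by (auto simp: state_0)
  then have "durations (state p) \<noteq> {}"
    by (auto simp: state_Suc step_eq)
  with p assms have "active (state p) i \<and> current (state p) i = j"
    by (auto simp: state_Suc step_eq split: if_splits)
  with p current_remaining_pos show ?thesis by blast
qed

definition "exhaust_time j = (LEAST p. remaining (state p) j \<le> 0)"

lemma exhaust_time_le: "remaining (state p) j \<le> 0 \<Longrightarrow> exhaust_time j \<le> p"
  unfolding exhaust_time_def by (rule Least_le)

lemma before_exhaust_time: "j < m \<Longrightarrow> remaining (state p) j > 0 \<Longrightarrow> p < exhaust_time j"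
  using remaining_state_antimono[of "exhaust_time j" p j]
    LeastI[of "\<lambda>p. remaining (state p) j \<le> 0" m] remaining_final[of j]
  unfolding exhaust_time_def by fastforce

text \<open>Column sums force some \<open>i'\<close> to get less of the good under \<open>a\<close>. Agent \<open>i'\<close> ate it in a phase
before its exhaustion, when every good that \<open>i'\<close> ranks higher was already gone.\<close>
lemma envy_moves_to_earlier_good:
  assumes alloc: "is_allocation n m q r a" and i: "i < n" and k: "k < m"
    and prefix: "\<forall>l<k. a i (\<pi> i ! l) = state m i (\<pi> i ! l)"
    and more: "state m i (\<pi> i ! k) < a i (\<pi> i ! k)"
  shows "(\<exists>i'<n. lex_prefers m (\<pi> i') (state m i') (a i')) \<or>
    (\<exists>i'<n. \<exists>k'<m. (\<forall>l<k'. a i' (\<pi> i' ! l) = state m i' (\<pi> i' ! l))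
       \<and> state m i' (\<pi> i' ! k') < a i' (\<pi> i' ! k')
       \<and> exhaust_time (\<pi> i' ! k') < exhaust_time (\<pi> i ! k))"
proof -
  define g where "g = \<pi> i ! k"
  have g: "g < m"
    using i k set_pref length_pref by (metis g_def lessThan_iff nth_mem)
  have "(\<Sum>i<n. a i g) = (\<Sum>i<n. state m i g)"
    using alloc g remaining_final[OF g] unfolding is_allocation_def remaining_def by auto
  moreover have "(\<Sum>i<n. state m i g) < (\<Sum>i<n. a i g)" if "\<forall>i'<n. state m i' g \<le> a i' g"
    using that i more unfolding g_def by (intro sum_strict_mono_ex1) auto
  ultimately obtain i' where i': "i' < n" "a i' g < state m i' g"
    using not_le by fastforce
  moreover have "a i' g \<ge> 0"
    using alloc i' g unfolding is_allocation_def by auto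
  ultimately obtain p where p: "active (state p) i'" "current (state p) i' = g"
    "remaining (state p) g > 0"
    using ate_before_exhaustion[OF i'(1) g] by force
  have p_before: "p < exhaust_time g"
    using before_exhaust_time[OF g p(3)] .
  obtain k0 where k0: "k0 < m" "\<pi> i' ! k0 = g"
    using pref_index_exists[OF i'(1) g] by auto
  consider "lex_prefers m (\<pi> i') (state m i') (a i')"
    | "lex_prefers m (\<pi> i') (a i') (state m i')"
    using lex_prefers_total[of k0 m "state m i'" "\<pi> i'" "a i'"] k0 i' by force
  then show ?thesis
  proof cases
    case 1
    with i' show ?thesis by blast
  next
    case 2
    then obtain k' where k': "k' < m" "\<forall>l<k'. a i' (\<pi> i' ! l) = state m i' (\<pi> i' ! l)"
      "state m i' (\<pi> i' ! k') < a i' (\<pi> i' ! k')"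
      unfolding lex_prefers_def by blast
    have "k' < k0"
      using k' k0 i'(2) by (metis linorder_neqE_nat order.asym)
    then have "\<not> remaining (state p) (\<pi> i' ! k') > 0"
      using not_before_hd_filter[OF _ filter_remaining_nonempty[OF p(1)], of k0 k'] p(2) k0
        prefs i'(1) length_pref[OF i'(1)]
      by (simp add: current_def is_pref_list_def)
    then have "exhaust_time (\<pi> i' ! k') < exhaust_time g"
      using exhaust_time_le p_before by (meson le_less_trans not_less)
    with i'(1) k' show ?thesis
      unfolding g_def by blast
  qed
qed

lemma envy_has_counterpart:
  assumes alloc: "is_allocation n m q r a" and i: "i < n"
    and envy: "lex_prefers m (\<pi> i) (a i) (state m i)"
  shows "\<exists>i'<n. lex_prefers m (\<pi> i') (state m i') (a i')"
proof -
  obtain k where "k < m" "\<forall>l<k. a i (\<pi> i ! l) = state m i (\<pi> i ! l)"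
    "state m i (\<pi> i ! k) < a i (\<pi> i ! k)"
    using envy unfolding lex_prefers_def by blast
  with i show ?thesis
  proof (induction "exhaust_time (\<pi> i ! k)" arbitrary: i k rule: less_induct)
    case less
    from envy_moves_to_earlier_good[OF alloc less.prems] less.hyps show ?case
      by blast
  qed
qed

end

theorem theorem1:
  fixes n m :: nat and q r :: "nat \<Rightarrow> real" and \<pi> :: "nat \<Rightarrow> nat list"
    and a :: "nat \<Rightarrow> nat \<Rightarrow> real"
  assumes q_pos: "\<forall>j<m. q j > 0"
    and r_pos: "\<forall>i<n. r i > 0"
    and balance: "(\<Sum>j<m. q j) = (\<Sum>i<n. r i)"
    and prefs: "\<forall>i<n. is_pref_list m (\<pi> i)"
    and alloc: "is_allocation n m q r a"
    and neq: "\<exists>i<n. \<exists>j<m. a i j \<noteq> SG n m q r \<pi> i j"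
  shows "\<exists>i<n. lex_prefers m (\<pi> i) (SG n m q r \<pi> i) (a i)"
proof -
  from neq obtain i j where ij: "i < n" "j < m" "a i j \<noteq> SG n m q r \<pi> i j"
    by auto
  interpret sg_setting n m q r \<pi>
    using q_pos r_pos prefs ij(1) by unfold_locales auto
  have SG_state: "SG n m q r \<pi> = state m"
    unfolding SG_def state_def ..
  obtain k where "k < m" "\<pi> i ! k = j"
    using pref_index_exists[OF ij(1,2)] by auto
  then consider "lex_prefers m (\<pi> i) (state m i) (a i)"
    | "lex_prefers m (\<pi> i) (a i) (state m i)"
    using lex_prefers_total[of k m "state m i" "\<pi> i" "a i"] ij(3) SG_state by force
  then show ?thesis
    using envy_has_counterpart[OF alloc ij(1)] ij(1) SG_state by cases auto
qed

end
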